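(* Let $S$ be a countable discrete inverse semigroup that satisfies the F\o lner condition but not the proper F\o lner condition. Then $S$ has a minimal projection.
   Context: Inverse semigroup: each $s$ has a unique $s^*$ with $ss^*s=s$, $s^*ss^*=s^*$; projections are elements of $E(S)=\{s^*s\}$, ordered by $e\le f\iff ef=e$; $e_0\in E(S)$ is minimal if $f\le e_0$ implies $f=e_0$. $S$ satisfies the F\o lner condition if for every $\varepsilon>0$ and finite $\mathcal F\subseteq S$ there is a finite non-empty $F\subseteq S$ with $|sF\cup F|\le(1+\varepsilon)|F|$ for all $s\in\mathcal F$; it satisfies the proper F\o lner condition if in addition, for any finite $A\subseteq S$, $F$ can be chosen with $A\subseteq F$. *)

theory Defs
  imports Complex_Main "HOL-Library.Countable_Set"
begin

definition inverse_semigroup :: "'a::semigroup_mult itself \<Rightarrow> bool" where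
  "inverse_semigroup _ \<longleftrightarrow> (\<forall>s::'a. \<exists>!t. s * t * s = s \<and> t * s * t = t)"

definition star :: "'a::semigroup_mult \<Rightarrow> 'a" where
  "star s = (THE t. s * t * s = s \<and> t * s * t = t)"

definition projections :: "'a::semigroup_mult itself \<Rightarrow> 'a set" where
  "projections _ = {star s * s | s. True}"

definition proj_le :: "'a::semigroup_mult \<Rightarrow> 'a \<Rightarrow> bool" where
  "proj_le e f \<longleftrightarrow> e * f = e"

definition minimal_projection :: "'a::semigroup_mult \<Rightarrow> bool" where
  "minimal_projection e0 \<longleftrightarrow> e0 \<in> projections TYPE('a) \<and>
     (\<forall>f \<in> projections TYPE('a). proj_le f e0 \<longrightarrow> f = e0)"

definition folner :: "'a::semigroup_mult itself \<Rightarrow> bool" where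
  "folner _ \<longleftrightarrow> (\<forall>(\<epsilon>::real)>0. \<forall>\<F>::'a set. finite \<F> \<longrightarrow>
     (\<exists>F::'a set. finite F \<and> F \<noteq> {} \<and>
        (\<forall>s\<in>\<F>. real (card ((\<lambda>x. s * x) ` F \<union> F)) \<le> (1 + \<epsilon>) * real (card F))))"

definition proper_folner :: "'a::semigroup_mult itself \<Rightarrow> bool" where
  "proper_folner _ \<longleftrightarrow> (\<forall>(\<epsilon>::real)>0. \<forall>\<F>::'a set. \<forall>A::'a set. finite \<F> \<longrightarrow> finite A \<longrightarrow>
     (\<exists>F::'a set. finite F \<and> F \<noteq> {} \<and> A \<subseteq> F \<and>
        (\<forall>s\<in>\<F>. real (card ((\<lambda>x. s * x) ` F \<union> F)) \<le> (1 + \<epsilon>) * real (card F))))"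

end

theory Submission
  imports Defs
begin

text \<open>
  Negating the proper F{\o}lner condition yields \<open>\<epsilon>\<close>, a finite \<open>\<F>\<close> and a finite \<open>A\<close> such
  that every finite nonempty \<open>V\<close> has, for some \<open>s \<in> \<F>\<close>, a boundary \<open>sV - V\<close> larger than
  \<open>\<epsilon>|V| - |A|\<close>. Hence finite sets invariant under left translation by \<open>\<F>\<close> have bounded size,
  while a F{\o}lner set with boundary ratio below \<open>\<epsilon>/(2|A| + 2)\<close> is itself invariant.
  An invariant set of maximal size is then closed under all right translations, i.e. a finite
  right ideal. Its projections form a finite nonempty set of commuting idempotents that
  contains every projection below one of its members, so a minimal element among them is a
  minimal projection of the whole semigroup.
\<close>

definition left_invariant :: "'a::semigroup_mult set \<Rightarrow> 'a set \<Rightarrow> bool" where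
  "left_invariant \<F> V \<longleftrightarrow> (\<forall>s\<in>\<F>. (\<lambda>x. s * x) ` V \<subseteq> V)"

lemma card_image_Un_self:
  assumes "finite F"
  shows "card (g ` F \<union> F) = card F + card (g ` F - F)"
  using assms by (metis Un_Diff_cancel2 Un_commute card_Un_disjoint Diff_disjoint finite_Diff finite_imageI)

lemma not_proper_folnerE:
  assumes "\<not> proper_folner TYPE('a)"
  obtains \<epsilon> :: real and \<F> A :: "'a::semigroup_mult set"
  where "\<epsilon> > 0" "finite \<F>" "finite A"
    "\<And>V. finite V \<Longrightarrow> V \<noteq> {} \<Longrightarrow>
       \<exists>s\<in>\<F>. \<epsilon> * card V < card ((\<lambda>x. s * x) ` V - V) + card A"
proof -
  obtain \<epsilon> :: real and \<F> A :: "'a set" where \<epsilon>: "\<epsilon> > 0" and \<F>: "finite \<F>" and A: "finite A" and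
    large: "\<forall>G. A \<subseteq> G \<longrightarrow> finite G \<longrightarrow> G = {} \<or>
      (\<exists>s\<in>\<F>. (1 + \<epsilon>) * card G < card ((\<lambda>x. s * x) ` G \<union> G))"
    using assms unfolding proper_folner_def by (auto simp: not_le)
  have "\<exists>s\<in>\<F>. \<epsilon> * card V < card ((\<lambda>x. s * x) ` V - V) + card A"
    if V: "finite V" "V \<noteq> {}" for V
  proof -
    define G where "G = V \<union> A"
    have G: "finite G" "G \<noteq> {}" "A \<subseteq> G" using V A by (auto simp: G_def)
    then obtain s where s: "s \<in> \<F>" and gt: "(1 + \<epsilon>) * card G < card ((\<lambda>x. s * x) ` G \<union> G)"
      using large by auto
    have "card ((\<lambda>x. s * x) ` G - G) \<le> card (((\<lambda>x. s * x) ` V - V) \<union> (\<lambda>x. s * x) ` A)"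
      using V A by (intro card_mono) (auto simp: G_def)
    also have "\<dots> \<le> card ((\<lambda>x. s * x) ` V - V) + card ((\<lambda>x. s * x) ` A)"
      by (rule card_Un_le)
    also have "\<dots> \<le> card ((\<lambda>x. s * x) ` V - V) + card A"
      using card_image_le[OF A] by simp
    finally have boundary: "card ((\<lambda>x. s * x) ` G - G) \<le> card ((\<lambda>x. s * x) ` V - V) + card A" .
    have "\<epsilon> * card V \<le> \<epsilon> * card G"
      using G \<epsilon> by (intro mult_left_mono) (auto simp: G_def card_mono)
    also have "\<dots> < card ((\<lambda>x. s * x) ` G - G)"
      using gt card_image_Un_self[OF G(1), of "\<lambda>x. s * x"] by (simp add: algebra_simps)
    finally show ?thesis using s boundary by (intro bexI[of _ s]) linarith+
  qed
  then show thesis using that \<epsilon> \<F> A by blast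
qed

lemma folner_small_boundary:
  fixes \<delta> :: real
  assumes "folner TYPE('a)" "\<delta> > 0" "finite \<F>"
  obtains F :: "'a::semigroup_mult set" where "finite F" "F \<noteq> {}"
    "\<And>s. s \<in> \<F> \<Longrightarrow> card ((\<lambda>x. s * x) ` F - F) \<le> \<delta> * card F"
proof -
  obtain F :: "'a set" where F: "finite F" "F \<noteq> {}" and
    small: "\<And>s. s \<in> \<F> \<Longrightarrow> card ((\<lambda>x. s * x) ` F \<union> F) \<le> (1 + \<delta>) * card F"
    using assms(1)[unfolded folner_def, rule_format, OF assms(2,3)] by blast
  have "card ((\<lambda>x. s * x) ` F - F) \<le> \<delta> * card F" if "s \<in> \<F>" for s
    using small[OF that] card_image_Un_self[OF F(1), of "\<lambda>x. s * x"] by (simp add: algebra_simps)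
  then show thesis using that F by blast
qed

lemma folner_not_proper_bounded_invariant:
  assumes "folner TYPE('a)" "\<not> proper_folner TYPE('a)"
  obtains \<F> :: "'a::semigroup_mult set" and N :: nat and F :: "'a set"
  where "\<And>V. finite V \<Longrightarrow> left_invariant \<F> V \<Longrightarrow> card V \<le> N"
    "finite F" "F \<noteq> {}" "left_invariant \<F> F"
proof -
  obtain \<epsilon> :: real and \<F> A :: "'a set" where \<epsilon>: "\<epsilon> > 0" and \<F>: "finite \<F>" and A: "finite A"
    and large: "\<And>V. finite V \<Longrightarrow> V \<noteq> {} \<Longrightarrow>
       \<exists>s\<in>\<F>. \<epsilon> * card V < card ((\<lambda>x. s * x) ` V - V) + card A"
    using not_proper_folnerE[OF assms(2)] by blast
  define K where "K = card A"
  have bound: "card V \<le> nat \<lceil>K / \<epsilon>\<rceil>" if V: "finite V" "left_invariant \<F> V" for V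
  proof (cases "V = {}")
    case False
    then obtain s where "s \<in> \<F>" "\<epsilon> * card V < card ((\<lambda>x. s * x) ` V - V) + K"
      using large V(1) K_def by blast
    moreover have "(\<lambda>x. s * x) ` V - V = {}" if "s \<in> \<F>" for s
      using V(2) that unfolding left_invariant_def by blast
    ultimately have "card V < K / \<epsilon>"
      using \<epsilon> by (simp add: field_simps)
    then show ?thesis by linarith
  qed simp
  define \<delta> where "\<delta> = \<epsilon> / (2 * K + 2)"
  have \<delta>: "\<delta> > 0" and \<epsilon>_eq: "\<epsilon> = \<delta> * (2 * K + 2)"
    using \<epsilon> by (simp_all add: \<delta>_def)
  obtain F where F: "finite F" "F \<noteq> {}"
    and small: "\<And>s. s \<in> \<F> \<Longrightarrow> card ((\<lambda>x. s * x) ` F - F) \<le> \<delta> * card F"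
    using folner_small_boundary[OF assms(1) \<delta> \<F>] by blast
  have "\<delta> * card F < 1"
  proof -
    obtain s where "s \<in> \<F>" "\<epsilon> * card F < card ((\<lambda>x. s * x) ` F - F) + K"
      using large F K_def by blast
    with small have "(\<delta> * card F) * (2 * real K + 1) < real K"
      unfolding \<epsilon>_eq by (fastforce simp: algebra_simps)
    moreover have "x < 1" if "x * (2 * k + 1) < k" "0 \<le> k" for x k :: real
    proof (rule ccontr)
      assume "\<not> x < 1"
      then have "1 * (2 * k + 1) \<le> x * (2 * k + 1)"
        using \<open>0 \<le> k\<close> by (intro mult_right_mono) auto
      then have "2 * k + 1 < k" using that(1) by simp
      with that(2) show False by simp
    qed
    ultimately show ?thesis by simp
  qed
  have "(\<lambda>x. s * x) ` F - F = {}" if "s \<in> \<F>" for s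
  proof -
    have "real (card ((\<lambda>x. s * x) ` F - F)) < 1"
      using small[OF that] \<open>\<delta> * card F < 1\<close> by linarith
    then show ?thesis using F(1) by simp
  qed
  then have "left_invariant \<F> F"
    unfolding left_invariant_def by blast
  with bound F show thesis by (rule that)
qed

lemma bounded_left_invariant_right_ideal:
  fixes \<F> :: "'a::semigroup_mult set"
  assumes bound: "\<And>V. finite V \<Longrightarrow> left_invariant \<F> V \<Longrightarrow> card V \<le> N"
    and F: "finite F" "F \<noteq> {}" "left_invariant \<F> F"
  obtains V :: "'a set" where "finite V" "V \<noteq> {}" "\<And>x t. x \<in> V \<Longrightarrow> x * t \<in> V"
proof -
  define P where "P V \<longleftrightarrow> finite V \<and> left_invariant \<F> V" for V
  have "\<exists>V. P V \<and> (\<forall>W. P W \<longrightarrow> card W \<le> card V)"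
  proof (rule ex_has_greatest_nat)
    show "P F" using F by (simp add: P_def)
    show "\<forall>W. P W \<longrightarrow> card W < Suc N" using bound by (simp add: P_def less_Suc_eq_le)
  qed
  then obtain V where V: "finite V" "left_invariant \<F> V"
    and max: "\<And>W. finite W \<Longrightarrow> left_invariant \<F> W \<Longrightarrow> card W \<le> card V"
    unfolding P_def by blast
  have "0 < card F" using F(1,2) by (simp add: card_gt_0_iff)
  with max[OF F(1,3)] have nonempty: "V \<noteq> {}" by auto
  have closed: "x * t \<in> V" if "x \<in> V" for x t
  proof -
    \<comment> \<open>left translations commute with right translations, so V \<union> V t is again invariant\<close>
    define W where "W = V \<union> (\<lambda>y. y * t) ` V"
    have "left_invariant \<F> W"
      unfolding left_invariant_def W_def
    proof (intro ballI subsetI)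
      fix s z assume s: "s \<in> \<F>" and "z \<in> (\<lambda>x. s * x) ` (V \<union> (\<lambda>y. y * t) ` V)"
      then obtain y where y: "y \<in> V" and "z = s * y \<or> z = s * (y * t)"
        by blast
      then have z: "z = s * y \<or> z = s * y * t" by (simp add: mult.assoc)
      have "s * y \<in> V" using V(2) s y unfolding left_invariant_def by blast
      with z show "z \<in> V \<union> (\<lambda>y. y * t) ` V" by blast
    qed
    moreover have "finite W" using V(1) by (simp add: W_def)
    ultimately have "card W \<le> card V" by (intro max)
    moreover have "V \<subseteq> W" by (simp add: W_def)
    moreover have "card V \<le> card W" by (rule card_mono) fact+
    ultimately have "V = W"
      using card_subset_eq[OF \<open>finite W\<close> \<open>V \<subseteq> W\<close>] by simp
    moreover have "x * t \<in> W" using that by (simp add: W_def)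
    ultimately show ?thesis by simp
  qed
  show thesis by (rule that[OF V(1) nonempty closed])
qed

locale inv_semigroup =
  assumes inverse: "inverse_semigroup TYPE('a::semigroup_mult)"
begin

lemma ex1_inverse: "\<exists>!t. (s::'a) * t * s = s \<and> t * s * t = t"
  using inverse unfolding inverse_semigroup_def by blast

lemma mult_star_mult: "(s::'a) * star s * s = s"
  and star_mult_star: "star s * s * star s = star s"
  using theI'[OF ex1_inverse[of s]] unfolding star_def by blast+

lemma star_unique: "(s::'a) * t * s = s \<Longrightarrow> t * s * t = t \<Longrightarrow> t = star s"
  using ex1_inverse[of s] mult_star_mult[of s] star_mult_star[of s] by blast

lemma star_star [simp]: "star (star (s::'a)) = s"
  using star_unique[OF star_mult_star mult_star_mult] by simp

lemma star_idempotent: "(e::'a) * e = e \<Longrightarrow> star e = e"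
  using star_unique[of e e] by simp

lemma idempotent_mult:
  assumes e: "(e::'a) * e = e" and f: "f * f = f"
  shows "(e * f) * (e * f) = e * f"
proof -
  define x where "x = star (e * f)"
  have x1: "e * f * x * (e * f) = e * f" and x2: "x * (e * f) * x = x"
    unfolding x_def by (rule mult_star_mult, rule star_mult_star)
  have ee: "e * (e * z) = e * z" and ff: "f * (f * z) = f * z" for z
    using e f by (metis mult.assoc)+
  \<comment> \<open>f x e is another inverse of e f, hence equals x; this makes x idempotent\<close>
  have "e * f * (f * x * e) * (e * f) = e * f"
    using x1 by (simp add: mult.assoc ee ff)
  moreover have "f * x * e * (e * f) * (f * x * e) = f * x * e"
  proof -
    have "f * x * e * (e * f) * (f * x * e) = f * (x * (e * f) * x) * e"
      by (simp add: mult.assoc ee ff)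
    also have "\<dots> = f * x * e"
      using x2 by (simp add: mult.assoc)
    finally show ?thesis .
  qed
  ultimately have fxe: "f * x * e = x"
    unfolding x_def by (rule star_unique)
  have "x * x = f * (x * (e * f) * x) * e"
    by (subst (1 2) fxe [symmetric]) (simp add: mult.assoc)
  also have "\<dots> = x"
    using x2 fxe by (simp add: mult.assoc)
  finally have "x * x = x" .
  moreover have "e * f = x"
    using star_idempotent[OF \<open>x * x = x\<close>] unfolding x_def by (metis star_star)
  ultimately show ?thesis by simp
qed

lemma idempotents_commute:
  assumes e: "(e::'a) * e = e" and f: "f * f = f"
  shows "e * f = f * e"
proof -
  have ee: "e * (e * z) = e * z" and ff: "f * (f * z) = f * z" for z
    using e f by (metis mult.assoc)+
  have "e * f * (f * e) * (e * f) = e * f"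
    using idempotent_mult[OF e f] by (simp add: mult.assoc ee ff)
  moreover have "f * e * (e * f) * (f * e) = f * e"
    using idempotent_mult[OF f e] by (simp add: mult.assoc ee ff)
  ultimately have "f * e = star (e * f)"
    by (rule star_unique)
  also have "\<dots> = e * f"
    using star_idempotent[OF idempotent_mult[OF e f]] .
  finally show ?thesis by simp
qed

lemma projections_iff_idempotent: "(e::'a) \<in> projections TYPE('a) \<longleftrightarrow> e * e = e"
proof
  assume "e \<in> projections TYPE('a)"
  then obtain s where "e = star s * s" unfolding projections_def by blast
  then show "e * e = e" using star_mult_star[of s] by (metis mult.assoc)
next
  assume "e * e = e"
  then have "e = star e * e" by (simp add: star_idempotent)
  then show "e \<in> projections TYPE('a)" unfolding projections_def by blast
qed

lemma mult_star_in_projections: "(s::'a) * star s \<in> projections TYPE('a)"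
  unfolding projections_iff_idempotent using mult_star_mult[of s] by (metis mult.assoc)

lemma finite_right_ideal_has_minimal_projection:
  assumes V: "finite V" "V \<noteq> {}" and right_ideal: "\<And>x t. x \<in> V \<Longrightarrow> (x::'a) * t \<in> V"
  shows "\<exists>e0::'a. minimal_projection e0"
proof -
  define X where "X = projections TYPE('a) \<inter> V"
  define below where "below e f \<longleftrightarrow> proj_le e f \<and> e \<noteq> f" for e f :: 'a
  obtain x where "x \<in> V" using V(2) by blast
  then have "x * star x \<in> X"
    using right_ideal mult_star_in_projections by (simp add: X_def)
  then have X: "finite X" "X \<noteq> {}" using V(1) by (auto simp: X_def)
  have commute: "e * f = f * e" if "e \<in> X" "f \<in> X" for e f
    using that idempotents_commute by (simp add: X_def projections_iff_idempotent)
  have "asymp_on X below"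
    unfolding asymp_on_def below_def proj_le_def using commute by metis
  moreover have "transp_on X below"
    unfolding transp_on_def below_def proj_le_def using commute by (metis mult.assoc)
  ultimately obtain e0 where e0: "e0 \<in> X" and min: "\<And>f. f \<in> X \<Longrightarrow> f \<noteq> e0 \<Longrightarrow> \<not> below f e0"
    using Finite_Set.bex_min_element[OF X(1) _ _ X(2)] by blast
  have "minimal_projection e0"
    unfolding minimal_projection_def
  proof (intro conjI ballI impI)
    show "e0 \<in> projections TYPE('a)" using e0 by (simp add: X_def)
    fix f assume f: "f \<in> projections TYPE('a)" and "proj_le f e0"
    moreover have "e0 * e0 = e0" "f * f = f"
      using e0 f by (simp_all add: X_def projections_iff_idempotent)
    ultimately have "f = e0 * f"
      using idempotents_commute unfolding proj_le_def by metis
    moreover have "e0 * f \<in> V"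
      using e0 right_ideal by (simp add: X_def)
    ultimately have "f \<in> X"
      using f by (simp add: X_def)
    then show "f = e0"
      using min \<open>proj_le f e0\<close> unfolding below_def by blast
  qed
  then show ?thesis ..
qed

end

theorem mainTheorem12:
  assumes "inverse_semigroup TYPE('a::semigroup_mult)"
    and "countable (UNIV :: 'a set)"
    and "folner TYPE('a)"
    and "\<not> proper_folner TYPE('a)"
  shows "\<exists>e0::'a. minimal_projection e0"
proof -
  interpret inv_semigroup using assms(1) by unfold_locales
  obtain \<F> :: "'a set" and N and F :: "'a set"
    where bound: "\<And>V. finite V \<Longrightarrow> left_invariant \<F> V \<Longrightarrow> card V \<le> N"
      and F: "finite F" "F \<noteq> {}" "left_invariant \<F> F"
    using folner_not_proper_bounded_invariant[OF assms(3,4)] by metis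
  obtain V :: "'a set" where "finite V" "V \<noteq> {}" "\<And>x t. x \<in> V \<Longrightarrow> x * t \<in> V"
    using bounded_left_invariant_right_ideal[OF bound F] by metis
  then show ?thesis
    by (rule finite_right_ideal_has_minimal_projection)
qed

end
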